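(* Let $b>0$ and let $F$ be as defined in the context. Then $F$ is strictly decreasing on $(x_\infty,x_0)$, $F\in C^\infty((x_\infty,x_0])$, and $$\lim_{x\downarrow x_\infty}F(x)=+\infty,\qquad \lim_{x\downarrow x_\infty}F'(x)=-\infty.$$
   Context: Constants: $a\in\mathbb{R}$, $b>0$, $\sigma>0$, $\rho>0$, $c>0$, $\alpha>0$. For $\beta<0$, let $D_\beta(x)=\frac{e^{-x^2/4}}{\Gamma(-\beta)}\int_0^\infty t^{-\beta-1}e^{-t^2/2-xt}\,dt$, and $\psi(x)=e^{\frac{(bx-a)^2}{2\sigma^2 b}}D_{-\rho/b}\big(-\frac{bx-a}{\sigma b}\sqrt{2b}\big)$, the positive strictly increasing fundamental solution of $\frac12\sigma^2u''+(a-bx)u'-\rho u=0$ (it satisfies $\psi''\psi-(\psi')^2>0$). Let $x_0$ (resp. $x_\infty$) be the unique solution on $(c,\infty)$ of $(x-c)\psi'(x)-\psi(x)=0$ (resp. $(x-c)\psi''(x)-\psi'(x)=0$); one has $c<x_\infty<x_0$. For $x\in(x_\infty,x_0]$ define $F(x)=\int_x^{x_0}\Theta(z)\,dz$ where $$\Theta(z)=\frac{\big[\psi'''(z)\big((z-c)\psi'(z)-\psi(z)\big)-\psi''(z)\big((z-c)\psi''(z)-\psi'(z)\big)\big]\psi(z)}{-\alpha\big[\psi''(z)\psi(z)-\psi'(z)^2\big]\big[(z-c)\psi''(z)-\psi'(z)\big]}.$$ *)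

theory Defs
  imports "HOL-Analysis.Analysis"
begin

text \<open>Parabolic cylinder function via its integral representation (for \<beta> < 0).\<close>
definition parab_D :: "real \<Rightarrow> real \<Rightarrow> real" where
  "parab_D \<beta> x = exp (- x\<^sup>2 / 4) / Gamma (- \<beta>) *
     integral {0<..} (\<lambda>t. t powr (- \<beta> - 1) * exp (- t\<^sup>2 / 2 - x * t))"

definition psi :: "real \<Rightarrow> real \<Rightarrow> real \<Rightarrow> real \<Rightarrow> real \<Rightarrow> real" where
  "psi a b \<sigma> \<rho> x = exp ((b * x - a)\<^sup>2 / (2 * \<sigma>\<^sup>2 * b)) *
     parab_D (- \<rho> / b) (- (b * x - a) / (\<sigma> * b) * sqrt (2 * b))"

definition psid :: "nat \<Rightarrow> real \<Rightarrow> real \<Rightarrow> real \<Rightarrow> real \<Rightarrow> real \<Rightarrow> real" where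
  "psid n a b \<sigma> \<rho> = (deriv ^^ n) (psi a b \<sigma> \<rho>)"

definition x0_pt :: "real \<Rightarrow> real \<Rightarrow> real \<Rightarrow> real \<Rightarrow> real \<Rightarrow> real" where
  "x0_pt a b \<sigma> \<rho> c = (THE x. c < x \<and>
     (x - c) * psid 1 a b \<sigma> \<rho> x - psid 0 a b \<sigma> \<rho> x = 0)"

definition xinf_pt :: "real \<Rightarrow> real \<Rightarrow> real \<Rightarrow> real \<Rightarrow> real \<Rightarrow> real" where
  "xinf_pt a b \<sigma> \<rho> c = (THE x. c < x \<and>
     (x - c) * psid 2 a b \<sigma> \<rho> x - psid 1 a b \<sigma> \<rho> x = 0)"

definition Theta :: "real \<Rightarrow> real \<Rightarrow> real \<Rightarrow> real \<Rightarrow> real \<Rightarrow> real \<Rightarrow> real \<Rightarrow> real" where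
  "Theta a b \<sigma> \<rho> c \<alpha> z =
     (let p0 = psid 0 a b \<sigma> \<rho> z; p1 = psid 1 a b \<sigma> \<rho> z;
          p2 = psid 2 a b \<sigma> \<rho> z; p3 = psid 3 a b \<sigma> \<rho> z in
      ((p3 * ((z - c) * p1 - p0) - p2 * ((z - c) * p2 - p1)) * p0) /
      (- \<alpha> * (p2 * p0 - p1\<^sup>2) * ((z - c) * p2 - p1)))"

text \<open>F(x) = \<integral>_x^{x0} \<Theta>(z) dz, meaningful for x in (x_inf, x0].\<close>
definition Ffun :: "real \<Rightarrow> real \<Rightarrow> real \<Rightarrow> real \<Rightarrow> real \<Rightarrow> real \<Rightarrow> real \<Rightarrow> real" where
  "Ffun a b \<sigma> \<rho> c \<alpha> x = integral {x..x0_pt a b \<sigma> \<rho> c} (Theta a b \<sigma> \<rho> c \<alpha>)"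

end

theory Submission
  imports Defs "HOL-Real_Asymp.Real_Asymp"
begin

text \<open>
  Only three properties of \<open>\<psi>\<close> matter: all derivatives \<open>\<psi>\<^sup>(\<^sup>n\<^sup>)\<close> are positive, they form a
  chain \<open>(\<psi>\<^sup>(\<^sup>n\<^sup>))' = \<psi>\<^sup>(\<^sup>n\<^sup>+\<^sup>1\<^sup>)\<close>, and \<open>\<psi>'\<^sup>2 < \<psi>'' \<psi>\<close>. Then
  \<open>g\<^sub>n(z) = (z - c) \<psi>\<^sup>(\<^sup>n\<^sup>+\<^sup>1\<^sup>)(z) - \<psi>\<^sup>(\<^sup>n\<^sup>)(z)\<close> is negative at \<open>c\<close> and has derivative
  \<open>(z - c) \<psi>\<^sup>(\<^sup>n\<^sup>+\<^sup>2\<^sup>)(z) > 0\<close> beyond \<open>c\<close>, so it has a unique zero \<open>r\<^sub>n > c\<close>; at \<open>r\<^sub>1\<close> the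
  inequality \<open>\<psi>'\<^sup>2 < \<psi>'' \<psi>\<close> gives \<open>g\<^sub>0 < 0\<close>, whence \<open>x\<^sub>\<infinity> = r\<^sub>1 < r\<^sub>0 = x\<^sub>0\<close>.
  On \<open>(x\<^sub>\<infinity>, x\<^sub>0]\<close> we have \<open>g\<^sub>0 \<le> 0 < g\<^sub>1\<close>, so \<open>\<Theta> > 0\<close> and \<open>F' = -\<Theta> < 0\<close>. Moreover
  \<open>\<Theta> = \<Phi> / g\<^sub>1\<close> with \<open>\<Phi>\<close> continuous and positive on \<open>[x\<^sub>\<infinity>, x\<^sub>0]\<close>, while \<open>g\<^sub>1\<close> vanishes at
  \<open>x\<^sub>\<infinity>\<close> with bounded slope; hence \<open>\<Theta>(z) \<ge> K / (z - x\<^sub>\<infinity>)\<close>, which forces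
  \<open>F(x) \<ge> K ln ((x\<^sub>0 - x\<^sub>\<infinity>) / (x - x\<^sub>\<infinity>)) \<rightarrow> \<infinity>\<close> and \<open>F'(x) \<le> -K / (x - x\<^sub>\<infinity>) \<rightarrow> -\<infinity>\<close>.
  Smoothness of \<open>F\<close> reduces to that of the rational expression \<open>\<Theta>\<close> in \<open>z\<close> and the \<open>\<psi>\<^sup>(\<^sup>n\<^sup>)\<close>.

  The three properties of \<open>\<psi>\<close> come from its integral representation:
  \<open>\<psi>\<^sup>(\<^sup>n\<^sup>)(x) = k\<^sup>n J\<^sub>n(k x + d) / \<Gamma>(\<rho>/b)\<close> with
  \<open>J\<^sub>n(v) = \<integral>\<^sub>0\<^sup>\<infinity> t\<^sup>\<rho>\<^sup>/\<^sup>b\<^sup>-\<^sup>1\<^sup>+\<^sup>n exp (-t\<^sup>2/2 + v t) dt\<close>. Differentiating under the integral sign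
  (dominated convergence) gives \<open>J\<^sub>n' = J\<^sub>n\<^sub>+\<^sub>1\<close>, and \<open>J\<^sub>1\<^sup>2 < J\<^sub>0 J\<^sub>2\<close> is the positivity of
  \<open>\<integral> t\<^sup>\<rho>\<^sup>/\<^sup>b\<^sup>-\<^sup>1 (t - J\<^sub>1/J\<^sub>0)\<^sup>2 exp (-t\<^sup>2/2 + v t) dt\<close>.
\<close>

section \<open>Iterated derivatives on open sets\<close>

primrec higher_differentiable_on :: "nat \<Rightarrow> real set \<Rightarrow> (real \<Rightarrow> real) \<Rightarrow> bool" where
  "higher_differentiable_on 0 S f \<longleftrightarrow> True"
| "higher_differentiable_on (Suc k) S f \<longleftrightarrow>
     (\<forall>x\<in>S. f differentiable (at x)) \<and> higher_differentiable_on k S (deriv f)"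

lemma deriv_cong_open:
  assumes "open S" "x \<in> S" "\<And>y. y \<in> S \<Longrightarrow> f y = g y"
  shows "deriv f x = deriv g x"
proof (rule deriv_cong_ev)
  show "\<forall>\<^sub>F y in nhds x. f y = g y"
    using eventually_nhds_in_open[OF assms(1,2)] by eventually_elim (use assms(3) in blast)
qed simp

lemma higher_differentiable_on_SucD:
  "higher_differentiable_on (Suc k) S f \<Longrightarrow> higher_differentiable_on k S f"
  by (induction k arbitrary: f) auto

lemma higher_differentiable_on_cong:
  assumes "open S" "\<And>x. x \<in> S \<Longrightarrow> f x = g x" "higher_differentiable_on k S f"
  shows "higher_differentiable_on k S g"
  using assms(2,3)
proof (induction k arbitrary: f g)
  case 0
  then show ?case by simp
next
  case (Suc k)
  have "g differentiable (at x)" if "x \<in> S" for x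
  proof -
    have "(f has_real_derivative deriv f x) (at x)"
      using Suc.prems that by (simp add: DERIV_deriv_iff_real_differentiable)
    then have "(g has_real_derivative deriv f x) (at x)"
      by (rule has_field_derivative_transform_within_open[OF _ assms(1) that]) (use Suc.prems in auto)
    then show ?thesis by (auto simp: real_differentiable_def)
  qed
  moreover have "higher_differentiable_on k S (deriv g)"
  proof (rule Suc.IH)
    show "deriv f x = deriv g x" if "x \<in> S" for x
      using deriv_cong_open[OF assms(1) that Suc.prems(1)] .
  qed (use Suc.prems in simp)
  ultimately show ?case by simp
qed

lemma higher_differentiable_on_SucI:
  assumes "open S" "\<And>x. x \<in> S \<Longrightarrow> (f has_real_derivative f' x) (at x)"
    and "higher_differentiable_on k S f'"
  shows "higher_differentiable_on (Suc k) S f"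
proof -
  have "higher_differentiable_on k S (deriv f)"
    by (rule higher_differentiable_on_cong[OF assms(1) _ assms(3)]) (use assms(2) DERIV_imp_deriv in metis)
  then show ?thesis using assms(2) by (auto simp: real_differentiable_def)
qed

lemma has_real_derivative_if_higher_differentiable_on:
  assumes "higher_differentiable_on (Suc k) S f" "x \<in> S"
  shows "((deriv ^^ k) f has_real_derivative (deriv ^^ Suc k) f x) (at x)"
  using assms
proof (induction k arbitrary: f)
  case 0
  then show ?case by (simp add: DERIV_deriv_iff_real_differentiable)
next
  case (Suc k)
  then show ?case using Suc.IH[of "deriv f"] by (simp add: funpow_Suc_right del: funpow.simps)
qed

lemma higher_differentiable_on_derivative_sequence:
  assumes "open S" "\<And>n x. (f n has_real_derivative f (Suc n) x) (at x)"
  shows "higher_differentiable_on k S (f n)"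
proof (induction k arbitrary: n)
  case 0
  then show ?case by simp
next
  case (Suc k)
  then show ?case by (intro higher_differentiable_on_SucI[OF assms(1) assms(2)])
qed

lemma higher_differentiable_on_const: "higher_differentiable_on k S (\<lambda>x. a)"
  by (induction k arbitrary: a) simp_all

lemma higher_differentiable_on_ident: "higher_differentiable_on k S (\<lambda>x. x)"
  by (cases k) (simp_all add: higher_differentiable_on_const)

lemma higher_differentiable_on_add:
  assumes "open S" "higher_differentiable_on k S f" "higher_differentiable_on k S g"
  shows "higher_differentiable_on k S (\<lambda>x. f x + g x)"
  using assms(2,3)
proof (induction k arbitrary: f g)
  case 0
  then show ?case by simp
next
  case (Suc k)
  show ?case
  proof (rule higher_differentiable_on_SucI[OF assms(1)])
    fix x assume "x \<in> S"
    then show "((\<lambda>x. f x + g x) has_real_derivative deriv f x + deriv g x) (at x)"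
      using Suc.prems by (intro DERIV_add) (auto simp: DERIV_deriv_iff_real_differentiable)
  qed (use Suc in simp)
qed

lemma higher_differentiable_on_mult:
  assumes "open S" "higher_differentiable_on k S f" "higher_differentiable_on k S g"
  shows "higher_differentiable_on k S (\<lambda>x. f x * g x)"
  using assms(2,3)
proof (induction k arbitrary: f g)
  case 0
  then show ?case by simp
next
  case (Suc k)
  show ?case
  proof (rule higher_differentiable_on_SucI[OF assms(1)])
    fix x assume "x \<in> S"
    then have "(f has_real_derivative deriv f x) (at x)" "(g has_real_derivative deriv g x) (at x)"
      using Suc.prems by (auto simp: DERIV_deriv_iff_real_differentiable)
    from DERIV_mult[OF this]
    show "((\<lambda>x. f x * g x) has_real_derivative deriv f x * g x + f x * deriv g x) (at x)"
      by (simp add: mult.commute)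
  next
    show "higher_differentiable_on k S (\<lambda>x. deriv f x * g x + f x * deriv g x)"
      using Suc.prems higher_differentiable_on_SucD[OF Suc.prems(1)]
        higher_differentiable_on_SucD[OF Suc.prems(2)]
      by (intro higher_differentiable_on_add[OF assms(1)] Suc.IH) simp_all
  qed
qed

lemma higher_differentiable_on_diff:
  assumes "open S" "higher_differentiable_on k S f" "higher_differentiable_on k S g"
  shows "higher_differentiable_on k S (\<lambda>x. f x - g x)"
  using higher_differentiable_on_add[OF assms(1,2)
      higher_differentiable_on_mult[OF assms(1) higher_differentiable_on_const assms(3), of "-1"]]
  by simp

lemma higher_differentiable_on_inverse:
  assumes "open S" "higher_differentiable_on k S f" "\<And>x. x \<in> S \<Longrightarrow> f x \<noteq> 0"
  shows "higher_differentiable_on k S (\<lambda>x. 1 / f x)"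
  using assms(2,3)
proof (induction k arbitrary: f)
  case 0
  then show ?case by simp
next
  case (Suc k)
  show ?case
  proof (rule higher_differentiable_on_SucI[OF assms(1)])
    fix x assume "x \<in> S"
    then show "((\<lambda>x. 1 / f x) has_real_derivative - deriv f x * (1 / f x) * (1 / f x)) (at x)"
      using Suc.prems
      by (auto intro!: derivative_eq_intros
          simp: DERIV_deriv_iff_real_differentiable power2_eq_square field_simps)
  next
    have "higher_differentiable_on k S (\<lambda>x. 1 / f x)"
      using Suc by (blast dest: higher_differentiable_on_SucD)
    then show "higher_differentiable_on k S (\<lambda>x. - deriv f x * (1 / f x) * (1 / f x))"
      using Suc.prems
      by (intro higher_differentiable_on_mult[OF assms(1)] higher_differentiable_on_diff[OF assms(1),
          of _ "\<lambda>x. 0", simplified]) (auto intro: higher_differentiable_on_const)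
  qed
qed

lemma higher_differentiable_on_divide:
  assumes "open S" "higher_differentiable_on k S f" "higher_differentiable_on k S g"
    and "\<And>x. x \<in> S \<Longrightarrow> g x \<noteq> 0"
  shows "higher_differentiable_on k S (\<lambda>x. f x / g x)"
  using higher_differentiable_on_mult[OF assms(1,2) higher_differentiable_on_inverse[OF assms(1,3,4)]]
  by simp

section \<open>Positive derivative chains satisfying Turan's inequality\<close>

locale log_convex_derivatives =
  fixes f :: "nat \<Rightarrow> real \<Rightarrow> real"
  assumes has_real_derivative_f: "\<And>n x. (f n has_real_derivative f (Suc n) x) (at x)"
    and f_pos: "\<And>n x. 0 < f n x"
    and turan: "\<And>x. (f 1 x)\<^sup>2 < f 2 x * f 0 x"
begin

lemma deriv_f: "deriv (f n) = f (Suc n)"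
  by (rule ext) (rule DERIV_imp_deriv[OF has_real_derivative_f])

lemma higher_deriv_f: "(deriv ^^ n) (f 0) = f n"
  by (induction n) (simp_all add: deriv_f)

lemma isCont_f: "isCont (f n) x"
  by (rule DERIV_isCont[OF has_real_derivative_f])

lemma f_strict_mono: "x < y \<Longrightarrow> f n x < f n y"
  by (rule DERIV_pos_imp_increasing) (use has_real_derivative_f f_pos in blast)+

lemma f_mono: "x \<le> y \<Longrightarrow> f n x \<le> f n y"
  using f_strict_mono by (cases "x = y") (auto intro: less_imp_le)

end

lemma log_convex_derivatives_affine:
  assumes "log_convex_derivatives h" "0 < C" "0 < k"
  shows "log_convex_derivatives (\<lambda>n x. C * k ^ n * h n (k * x + d))"
proof -
  interpret log_convex_derivatives h by fact
  show ?thesis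
  proof
    fix n x
    have "((\<lambda>x. h n (k * x + d)) has_real_derivative h (Suc n) (k * x + d) * k) (at x)"
      by (rule DERIV_chain2[OF has_real_derivative_f]) (auto intro!: derivative_eq_intros)
    from DERIV_cmult[OF this, of "C * k ^ n"]
    show "((\<lambda>x. C * k ^ n * h n (k * x + d)) has_real_derivative
        C * k ^ Suc n * h (Suc n) (k * x + d)) (at x)"
      by (simp add: algebra_simps)
    show "0 < C * k ^ n * h n (k * x + d)"
      using assms f_pos by simp
    have "(C * k)\<^sup>2 * (h 1 (k * x + d))\<^sup>2 < (C * k)\<^sup>2 * (h 2 (k * x + d) * h 0 (k * x + d))"
      using assms turan by (intro mult_strict_left_mono) simp_all
    then show "(C * k ^ 1 * h 1 (k * x + d))\<^sup>2 <
        C * k ^ 2 * h 2 (k * x + d) * (C * k ^ 0 * h 0 (k * x + d))"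
      by (simp add: power2_eq_square algebra_simps)
  qed
qed

section \<open>Monotonicity, smoothness and blow-up of \<open>F\<close>\<close>

text \<open>\<open>f n\<close> stands for \<open>\<psi>\<^sup>(\<^sup>n\<^sup>)\<close>, and \<open>theta_factor\<close> below for \<open>\<Phi>\<close>.\<close>

locale psi_setting = log_convex_derivatives f for f +
  fixes c \<alpha> :: real
  assumes alpha_pos: "0 < \<alpha>"
begin

definition gap :: "nat \<Rightarrow> real \<Rightarrow> real" where
  "gap n z = (z - c) * f (n + 1) z - f n z"

definition gap_root :: "nat \<Rightarrow> real" where
  "gap_root n = (THE z. c < z \<and> gap n z = 0)"

abbreviation x_0 :: real where "x_0 \<equiv> gap_root 0"

abbreviation x_inf :: real where "x_inf \<equiv> gap_root 1"

definition theta :: "real \<Rightarrow> real" where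
  "theta z = (f 3 z * gap 0 z - f 2 z * gap 1 z) * f 0 z /
     (- \<alpha> * (f 2 z * f 0 z - (f 1 z)\<^sup>2) * gap 1 z)"

definition F :: "real \<Rightarrow> real" where
  "F x = integral {x..x_0} theta"

lemma has_real_derivative_gap: "(gap n has_real_derivative (z - c) * f (n + 2) z) (at z)"
  unfolding gap_def[abs_def]
  by (auto intro!: derivative_eq_intros has_real_derivative_f[THEN DERIV_cong])

lemma isCont_gap: "isCont (gap n) z"
  by (rule DERIV_isCont[OF has_real_derivative_gap])

lemma gap_strict_mono:
  assumes "c \<le> x" "x < y"
  shows "gap n x < gap n y"
proof (rule DERIV_pos_imp_increasing_open[OF assms(2)])
  fix t assume "x < t" "t < y"
  then show "\<exists>d. (gap n has_real_derivative d) (at t) \<and> 0 < d"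
    using assms has_real_derivative_gap f_pos by (intro exI conjI) auto
qed (intro continuous_at_imp_continuous_on ballI isCont_gap)

lemma gap_at_c: "gap n c < 0"
  by (simp add: gap_def f_pos)

lemma gap_has_root: "\<exists>z>c. gap n z = 0"
proof -
  define m where "m = f (n + 2) (c + 1)"
  define z where "z = c + 1 + (\<bar>gap n (c + 1)\<bar> + 1) / m"
  have m: "0 < m"
    by (simp add: m_def f_pos)
  then have z: "c + 1 < z"
    by (simp add: z_def)
  obtain t where t: "c + 1 < t" "t < z"
    and t_eq: "gap n z - gap n (c + 1) = (z - (c + 1)) * ((t - c) * f (n + 2) t)"
    using MVT2[OF z, of "gap n" "\<lambda>t. (t - c) * f (n + 2) t"] has_real_derivative_gap by blast
  have "1 * m \<le> (t - c) * f (n + 2) t"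
    using t m f_mono[of "c + 1" t "n + 2"] by (intro mult_mono) (auto simp: m_def)
  then have "(z - (c + 1)) * m \<le> gap n z - gap n (c + 1)"
    unfolding t_eq using z by (intro mult_left_mono) auto
  moreover have "(z - (c + 1)) * m = \<bar>gap n (c + 1)\<bar> + 1"
    using m by (simp add: z_def)
  ultimately have "0 < gap n z"
    by linarith
  then obtain y where y: "c \<le> y" "y \<le> z" "gap n y = 0"
    using IVT[of "gap n" c 0 z] gap_at_c[of n] z isCont_gap by fastforce
  moreover have "y \<noteq> c"
    using gap_at_c[of n] y by auto
  ultimately show ?thesis
    by (intro exI[of _ y]) auto
qed

lemma gap_root: "c < gap_root n" "gap n (gap_root n) = 0"
proof -
  have "\<exists>!z. c < z \<and> gap n z = 0"
  proof (rule ex_ex1I)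
    show "\<exists>z. c < z \<and> gap n z = 0"
      using gap_has_root by blast
  next
    fix x y assume "c < x \<and> gap n x = 0" "c < y \<and> gap n y = 0"
    then show "x = y"
      using gap_strict_mono[of x y n] gap_strict_mono[of y x n]
      by (cases x y rule: linorder_cases) auto
  qed
  from theI'[OF this] show "c < gap_root n" "gap n (gap_root n) = 0"
    unfolding gap_root_def by blast+
qed

lemma gap_neg_iff: "c \<le> z \<Longrightarrow> gap n z < 0 \<longleftrightarrow> z < gap_root n"
  using gap_strict_mono[of z "gap_root n" n] gap_strict_mono[of "gap_root n" z n] gap_root[of n]
  by (cases z "gap_root n" rule: linorder_cases) auto

lemma gap_nonpos_iff: "c \<le> z \<Longrightarrow> gap n z \<le> 0 \<longleftrightarrow> z \<le> gap_root n"
  using gap_strict_mono[of z "gap_root n" n] gap_strict_mono[of "gap_root n" z n] gap_root[of n]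
  by (cases z "gap_root n" rule: linorder_cases) auto

lemma c_less_x_inf: "c < x_inf"
  by (rule gap_root)

lemma gap_1_pos: "x_inf < z \<Longrightarrow> 0 < gap 1 z"
  using gap_nonpos_iff[of z 1] c_less_x_inf by auto

lemma x_inf_less_x_0: "x_inf < x_0"
proof -
  let ?x = x_inf
  have root: "(?x - c) * f 2 ?x = f 1 ?x"
    using gap_root(2)[of 1] by (simp add: gap_def numeral_2_eq_2)
  have "f 2 ?x * gap 0 ?x = (?x - c) * f 2 ?x * f 1 ?x - f 2 ?x * f 0 ?x"
    by (simp add: gap_def algebra_simps)
  also have "\<dots> = (f 1 ?x)\<^sup>2 - f 2 ?x * f 0 ?x"
    by (simp only: root power2_eq_square)
  finally have "f 2 ?x * gap 0 ?x < 0"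
    using turan[of ?x] by simp
  then have "gap 0 ?x < 0"
    using f_pos[of 2 ?x] by (simp add: mult_less_0_iff)
  then show ?thesis
    using gap_neg_iff[of ?x 0] c_less_x_inf by simp
qed

definition theta_factor :: "real \<Rightarrow> real" where
  "theta_factor z = (f 2 z * gap 1 z - f 3 z * gap 0 z) * f 0 z / (\<alpha> * (f 2 z * f 0 z - (f 1 z)\<^sup>2))"

lemma theta_eq_factor: "theta z = theta_factor z / gap 1 z"
proof -
  have "theta z = - (f 3 z * gap 0 z - f 2 z * gap 1 z) * f 0 z / (\<alpha> * (f 2 z * f 0 z - (f 1 z)\<^sup>2) * gap 1 z)"
    unfolding theta_def by (simp only: mult_minus_left divide_minus_right minus_divide_left)
  then show ?thesis
    by (simp add: theta_factor_def)
qed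

lemma continuous_on_theta_factor: "continuous_on S theta_factor"
proof -
  have "\<alpha> * (f 2 z * f 0 z - (f 1 z)\<^sup>2) \<noteq> 0" for z
    using alpha_pos turan[of z] by simp
  then show ?thesis
    unfolding theta_factor_def[abs_def]
    by (intro continuous_at_imp_continuous_on ballI continuous_intros isCont_f isCont_gap)
qed

lemma theta_factor_pos:
  assumes "x_inf \<le> z" "z \<le> x_0"
  shows "0 < theta_factor z"
proof -
  have cz: "c \<le> z"
    using c_less_x_inf assms by simp
  have g0: "gap 0 z \<le> 0" and g1: "0 \<le> gap 1 z"
    using gap_nonpos_iff[OF cz, of 0] gap_neg_iff[OF cz, of 1] assms by auto
  have "gap 0 z < 0 \<or> 0 < gap 1 z"
    using gap_neg_iff[OF cz, of 0] gap_1_pos[of z] x_inf_less_x_0 assms by fastforce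
  then have "0 < f 2 z * gap 1 z - f 3 z * gap 0 z"
    using g0 g1 f_pos[of 2 z] f_pos[of 3 z]
    by (smt (verit) mult_pos_pos mult_nonneg_nonneg mult_pos_neg mult_nonneg_nonpos)
  then show ?thesis
    using f_pos[of 0 z] turan[of z] alpha_pos by (simp add: theta_factor_def)
qed

lemma theta_pos: "x_inf < z \<Longrightarrow> z \<le> x_0 \<Longrightarrow> 0 < theta z"
  using theta_factor_pos[of z] gap_1_pos[of z] by (simp add: theta_eq_factor)

lemma continuous_on_theta:
  assumes "S \<subseteq> {x_inf<..}"
  shows "continuous_on S theta"
proof -
  have "gap 1 z \<noteq> 0" if "z \<in> S" for z
    using assms that gap_1_pos[of z] by auto
  then show ?thesis
    unfolding theta_eq_factor[abs_def]
    by (intro continuous_on_divide continuous_on_theta_factor continuous_at_imp_continuous_on ballI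
        isCont_gap)
qed

lemma gap_1_le:
  assumes "x_inf \<le> z" "z \<le> x_0"
  shows "gap 1 z \<le> (x_0 - c) * f 3 x_0 * (z - x_inf)"
proof (cases "z = x_inf")
  case True
  then show ?thesis by (simp add: gap_root)
next
  case False
  with assms have z: "x_inf < z" by simp
  obtain t where t: "x_inf < t" "t < z"
    and t_eq: "gap 1 z - gap 1 x_inf = (z - x_inf) * ((t - c) * f 3 t)"
  proof (rule MVT2[OF z, THEN exE])
    show "(gap 1 has_real_derivative (t - c) * f 3 t) (at t)" for t
      using has_real_derivative_gap[of 1 t] by (simp del: One_nat_def)
  qed (use that in blast)
  have "(t - c) * f 3 t \<le> (x_0 - c) * f 3 x_0"
    using t assms c_less_x_inf f_mono[of t x_0 3] f_pos[of 3 t] by (intro mult_mono) auto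
  then have "(z - x_inf) * ((t - c) * f 3 t) \<le> (z - x_inf) * ((x_0 - c) * f 3 x_0)"
    using z by (intro mult_left_mono) auto
  then show ?thesis
    using t_eq gap_root(2)[of 1] by (simp add: mult.commute)
qed

lemma theta_lower_bound:
  obtains K where "0 < K" "\<And>z. x_inf < z \<Longrightarrow> z \<le> x_0 \<Longrightarrow> K / (z - x_inf) \<le> theta z"
proof -
  obtain zm where zm: "zm \<in> {x_inf..x_0}" "\<And>z. z \<in> {x_inf..x_0} \<Longrightarrow> theta_factor zm \<le> theta_factor z"
    using continuous_attains_inf[OF compact_Icc _ continuous_on_theta_factor[of "{x_inf..x_0}"]]
      x_inf_less_x_0 by auto
  define m where "m = theta_factor zm"
  define M where "M = (x_0 - c) * f 3 x_0"
  have m: "0 < m"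
    using theta_factor_pos zm(1) by (simp add: m_def)
  have M: "0 < M"
    using gap_root(1)[of 0] f_pos[of 3 x_0] by (simp add: M_def)
  show ?thesis
  proof (rule that[of "m / M"])
    show "0 < m / M"
      using m M by simp
    fix z assume z: "x_inf < z" "z \<le> x_0"
    have "m / M / (z - x_inf) = m / (M * (z - x_inf))"
      by simp
    also have "\<dots> \<le> theta_factor z / gap 1 z"
      using zm(2)[of z] z m gap_1_pos[of z] gap_1_le[of z]
      by (intro frac_le) (auto simp: m_def M_def)
    finally show "m / M / (z - x_inf) \<le> theta z"
      by (simp add: theta_eq_factor)
  qed
qed

lemma higher_differentiable_theta: "higher_differentiable_on k {x_inf<..} theta"
proof -
  note intros = higher_differentiable_on_divide higher_differentiable_on_mult
    higher_differentiable_on_diff higher_differentiable_on_const higher_differentiable_on_ident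
  have f: "higher_differentiable_on k {x_inf<..} (f n)" for n
    by (rule higher_differentiable_on_derivative_sequence) (simp_all add: has_real_derivative_f)
  have gap: "higher_differentiable_on k {x_inf<..} (gap n)" for n
    unfolding gap_def[abs_def] by (intro intros f) simp_all
  have "- \<alpha> * (f 2 z * f 0 z - f 1 z * f 1 z) * gap 1 z \<noteq> 0" if "x_inf < z" for z
    using alpha_pos turan[of z] gap_1_pos[OF that] by (simp add: power2_eq_square)
  then show ?thesis
    unfolding theta_def[abs_def] power2_eq_square by (intro intros f gap) auto
qed

lemma has_real_derivative_F_within:
  assumes "x_inf < a" "a \<le> x" "x \<le> x_0"
  shows "(F has_real_derivative - theta x) (at x within {a..x_0})"
  unfolding F_def[abs_def]
  by (rule integral_has_real_derivative') (use assms in \<open>auto intro: continuous_on_theta\<close>)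

lemma has_real_derivative_F_within_domain:
  assumes "x_inf < x" "x \<le> x_0"
  shows "(F has_real_derivative - theta x) (at x within {x_inf<..x_0})"
proof -
  define a where "a = (x_inf + x) / 2"
  have "(F has_real_derivative - theta x) (at x within {a..x_0})"
    by (rule has_real_derivative_F_within) (use assms in \<open>auto simp: a_def\<close>)
  moreover have "at x within {a..x_0} = at x within {x_inf<..x_0}"
    by (rule at_within_nhd[of x "{a<..}"]) (use assms in \<open>auto simp: a_def\<close>)
  ultimately show ?thesis
    by simp
qed

lemma has_real_derivative_F:
  assumes "x_inf < x" "x < x_0"
  shows "(F has_real_derivative - theta x) (at x)"
proof -
  define a where "a = (x_inf + x) / 2"
  have "(F has_real_derivative - theta x) (at x within {a..x_0})"
    by (rule has_real_derivative_F_within) (use assms in \<open>auto simp: a_def\<close>)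
  moreover have "at x within {a..x_0} = at x"
    by (rule at_within_interior) (use assms in \<open>auto simp: a_def\<close>)
  ultimately show ?thesis
    by simp
qed

lemma F_strict_antimono:
  assumes "x_inf < x" "x < y" "y < x_0"
  shows "F y < F x"
proof (rule DERIV_neg_imp_decreasing[OF assms(2)])
  fix t assume "x \<le> t" "t \<le> y"
  then show "\<exists>d. (F has_real_derivative d) (at t) \<and> d < 0"
    using assms has_real_derivative_F[of t] theta_pos[of t] by (intro exI conjI) auto
qed

lemma F_derivatives:
  "\<exists>Fd. Fd 0 = F \<and>
     (\<forall>n. \<forall>x\<in>{x_inf<..x_0}. (Fd n has_real_derivative Fd (Suc n) x) (at x within {x_inf<..x_0}))"
proof -
  define Fd where "Fd n = (case n of 0 \<Rightarrow> F | Suc m \<Rightarrow> (\<lambda>x. - (deriv ^^ m) theta x))" for n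
  have "(Fd n has_real_derivative Fd (Suc n) x) (at x within {x_inf<..x_0})"
    if x: "x \<in> {x_inf<..x_0}" for n x
  proof (cases n)
    case 0
    then show ?thesis
      using has_real_derivative_F_within_domain x by (simp add: Fd_def)
  next
    case (Suc m)
    have "((deriv ^^ m) theta has_real_derivative (deriv ^^ Suc m) theta x) (at x)"
      using x by (intro has_real_derivative_if_higher_differentiable_on[OF higher_differentiable_theta])
        simp
    then show ?thesis
      using Suc by (simp add: Fd_def DERIV_minus has_field_derivative_at_within del: funpow.simps)
  qed
  moreover have "Fd 0 = F"
    by (simp add: Fd_def)
  ultimately show ?thesis
    by blast
qed

lemma F_tendsto_at_top: "filterlim F at_top (at_right x_inf)"
proof -
  obtain K where K: "0 < K" "\<And>z. x_inf < z \<Longrightarrow> z \<le> x_0 \<Longrightarrow> K / (z - x_inf) \<le> theta z"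
    using theta_lower_bound by blast
  have "\<forall>\<^sub>F x in at_right x_inf. K * ln (x_0 - x_inf) - K * ln (x - x_inf) \<le> F x"
    using eventually_at_right_real[OF x_inf_less_x_0]
  proof eventually_elim
    case (elim x)
    have "((\<lambda>z. K / (z - x_inf)) has_integral K * ln (x_0 - x_inf) - K * ln (x - x_inf)) {x..x_0}"
    proof (rule fundamental_theorem_of_calculus)
      fix z assume "z \<in> {x..x_0}"
      with elim have "((\<lambda>z. K * ln (z - x_inf)) has_real_derivative K / (z - x_inf)) (at z)"
        by (auto intro!: derivative_eq_intros simp: field_simps)
      then show "((\<lambda>z. K * ln (z - x_inf)) has_vector_derivative K / (z - x_inf)) (at z within {x..x_0})"
        by (simp add: has_real_derivative_iff_has_vector_derivative[symmetric] has_field_derivative_at_within)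
    qed (use elim in simp)
    moreover have "(theta has_integral F x) {x..x_0}"
      unfolding F_def using elim
      by (intro integrable_integral integrable_continuous_interval continuous_on_theta) auto
    ultimately show ?case
      by (rule has_integral_le) (use elim K(2) in auto)
  qed
  moreover have "filterlim (\<lambda>x. K * ln (b - a) - K * ln (x - a)) at_top (at_right a)" for a b :: real
    using K(1) by real_asymp
  ultimately show ?thesis
    by (rule filterlim_at_top_mono[rotated])
qed

lemma deriv_F_tendsto_at_bot: "filterlim (deriv F) at_bot (at_right x_inf)"
proof -
  obtain K where K: "0 < K" "\<And>z. x_inf < z \<Longrightarrow> z \<le> x_0 \<Longrightarrow> K / (z - x_inf) \<le> theta z"
    using theta_lower_bound by blast
  have "\<forall>\<^sub>F x in at_right x_inf. deriv F x \<le> - (K / (x - x_inf))"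
    using eventually_at_right_real[OF x_inf_less_x_0]
  proof eventually_elim
    case (elim x)
    then have "deriv F x = - theta x"
      by (intro DERIV_imp_deriv has_real_derivative_F) auto
    with elim K(2)[of x] show ?case
      by simp
  qed
  moreover have "filterlim (\<lambda>x. - (K / (x - a))) at_bot (at_right a)" for a :: real
    using K(1) by real_asymp
  ultimately show ?thesis
    by (rule filterlim_at_bot_mono[rotated])
qed

end

section \<open>Gaussian moments\<close>

definition gauss_moment :: "real \<Rightarrow> nat \<Rightarrow> real \<Rightarrow> real" where
  "gauss_moment p n v = integral {0<..} (\<lambda>t. t powr (p + real n) * exp (- t\<^sup>2 / 2 + v * t))"

lemma gauss_weight_integrable:
  fixes r w :: real
  assumes "-1 < r"
  shows "(\<lambda>t. t powr r * exp (- t\<^sup>2 / 2 + w * t)) integrable_on {0<..}"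
proof -
  define C where "C = exp ((w + 1)\<^sup>2 / 2)"
  have "(\<lambda>t. t powr r / exp t) integrable_on {0..}"
    using Gamma_integral_real[of "r + 1"] assms by (auto simp: integrable_on_def)
  then have "(\<lambda>t. t powr r / exp t) integrable_on {0<..}"
    by (rule integrable_spike_set) (auto intro: negligible_subset[OF negligible_sing[of 0]])
  then have gamma: "(\<lambda>t. C * (t powr r / exp t)) integrable_on {0<..}"
    by (rule integrable_on_mult_right)
  show ?thesis
  proof (rule measurable_bounded_by_integrable_imp_integrable_real[OF _ gamma])
    show "(\<lambda>t. t powr r * exp (- t\<^sup>2 / 2 + w * t)) \<in> borel_measurable (lebesgue_on {0<..})"
      by (intro continuous_imp_measurable_on_sets_lebesgue continuous_intros) auto
    fix t :: real assume "t \<in> {0<..}"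
    have "- t\<^sup>2 / 2 + w * t = (w + 1)\<^sup>2 / 2 - t - (t - (w + 1))\<^sup>2 / 2"
      by (simp add: power2_eq_square field_simps)
    then have "exp (- t\<^sup>2 / 2 + w * t) \<le> C / exp t"
      by (simp add: C_def exp_diff[symmetric])
    then have "t powr r * exp (- t\<^sup>2 / 2 + w * t) \<le> t powr r * (C / exp t)"
      by (rule mult_left_mono) simp
    then show "\<bar>t powr r * exp (- t\<^sup>2 / 2 + w * t)\<bar> \<le> C * (t powr r / exp t)"
      by (simp add: ac_simps)
  qed simp
qed

lemma abs_exp_minus_one_le: "\<bar>exp x - 1\<bar> \<le> \<bar>x\<bar> * exp \<bar>x\<bar>" for x :: real
proof (cases "0 \<le> x")
  case True
  have "(1 - x) * exp x \<le> exp (- x) * exp x"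
    using exp_ge_add_one_self[of "- x"] by (intro mult_right_mono) auto
  then show ?thesis
    using True by (simp add: exp_minus algebra_simps)
next
  case False
  have "1 + x \<le> exp x" "1 \<le> exp (- x)"
    using exp_ge_add_one_self[of x] False by auto
  then have "- x \<le> - x * exp (- x)"
    using False by (simp add: mult_le_cancel_left1)
  then have "1 - exp x \<le> - x * exp (- x)"
    using \<open>1 + x \<le> exp x\<close> by linarith
  then show ?thesis
    using False by simp
qed

lemma abs_exp_difference_quotient_le:
  fixes h t B :: real
  assumes "0 \<le> t" "h \<noteq> 0" "\<bar>h\<bar> \<le> B"
  shows "\<bar>(exp (h * t) - 1) / h\<bar> \<le> t * exp (B * t)"
proof -
  have "\<bar>exp (h * t) - 1\<bar> \<le> \<bar>h * t\<bar> * exp \<bar>h * t\<bar>"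
    by (rule abs_exp_minus_one_le)
  also have "\<dots> \<le> \<bar>h\<bar> * (t * exp (B * t))"
  proof -
    have "\<bar>h\<bar> * t \<le> B * t"
      using assms by (intro mult_right_mono)
    then show ?thesis
      using assms by (simp add: abs_mult mult_left_mono)
  qed
  finally show ?thesis
    using assms(2) by (simp add: divide_le_eq mult.commute)
qed

lemma tendsto_exp_difference_quotient:
  fixes t :: real
  assumes "X \<longlonglongrightarrow> 0" "\<And>i. X i \<noteq> 0"
  shows "(\<lambda>i. (exp (X i * t) - 1) / X i) \<longlonglongrightarrow> t"
proof -
  have "((\<lambda>h. exp (h * t)) has_real_derivative t) (at 0)"
    by (auto intro!: derivative_eq_intros)
  then have "((\<lambda>h. (exp (h * t) - 1) / h) \<longlongrightarrow> t) (at 0)"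
    by (simp add: has_field_derivative_iff)
  then have "((\<lambda>h. (exp (h * t) - 1) / h) \<circ> X) \<longlonglongrightarrow> t"
    using assms tendsto_at_iff_sequentially[of _ t 0 UNIV] by auto
  then show ?thesis
    by (simp add: o_def)
qed

lemma gauss_moment_difference_quotient:
  assumes "-1 < p" "h \<noteq> 0"
  shows "((\<lambda>t. t powr (p + real n) * exp (- t\<^sup>2 / 2 + v * t) * ((exp (h * t) - 1) / h))
           has_integral (gauss_moment p n (v + h) - gauss_moment p n v) / h) {0<..}"
proof -
  define w where "w u t = t powr (p + real n) * exp (- t\<^sup>2 / 2 + u * t)" for u t :: real
  have "(w u has_integral gauss_moment p n u) {0<..}" for u
    unfolding w_def[abs_def] gauss_moment_def
    using assms by (intro integrable_integral gauss_weight_integrable) simp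
  then have "((\<lambda>t. (w (v + h) t - w v t) / h) has_integral
      (gauss_moment p n (v + h) - gauss_moment p n v) / h) {0<..}"
    by (intro has_integral_divide has_integral_diff)
  then show ?thesis
  proof (rule has_integral_eq[rotated])
    fix t
    have "exp (- t\<^sup>2 / 2 + (v + h) * t) = exp (- t\<^sup>2 / 2 + v * t) * exp (h * t)"
      by (simp add: algebra_simps flip: exp_add)
    then show "(w (v + h) t - w v t) / h =
        t powr (p + real n) * exp (- t\<^sup>2 / 2 + v * t) * ((exp (h * t) - 1) / h)"
      by (simp add: w_def algebra_simps diff_divide_distrib)
  qed
qed

lemma tendsto_gauss_moment_difference_quotient:
  assumes "-1 < p" "h \<longlonglongrightarrow> 0" "\<And>i. h i \<noteq> 0"
  shows "(\<lambda>i. (gauss_moment p n (v + h i) - gauss_moment p n v) / h i) \<longlonglongrightarrow> gauss_moment p (Suc n) v"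
proof -
  define w where "w t = t powr (p + real n) * exp (- t\<^sup>2 / 2 + v * t)" for t :: real
  define q where "q i t = w t * ((exp (h i * t) - 1) / h i)" for i t
  have q_integral: "(q i has_integral (gauss_moment p n (v + h i) - gauss_moment p n v) / h i) {0<..}" for i
    unfolding q_def[abs_def] w_def using assms by (intro gauss_moment_difference_quotient)
  obtain B where B: "\<And>i. \<bar>h i\<bar> \<le> B"
    using convergent_imp_Bseq[OF convergentI[OF assms(2)]] by (metis BseqE real_norm_def)
  have "(\<lambda>i. integral {0<..} (q i)) \<longlonglongrightarrow> integral {0<..} (\<lambda>t. w t * t)"
  proof (rule dominated_convergence(2))
    show "q i integrable_on {0<..}" for i
      using q_integral by blast
    show "(\<lambda>t. t powr (p + real n + 1) * exp (- t\<^sup>2 / 2 + (v + B) * t)) integrable_on {0<..}"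
      using assms by (intro gauss_weight_integrable) simp
    fix i and t :: real assume t: "t \<in> {0<..}"
    have "norm (q i t) = w t * \<bar>(exp (h i * t) - 1) / h i\<bar>"
      using t by (simp add: q_def w_def abs_mult)
    also have "\<dots> \<le> w t * (t * exp (B * t))"
      using t assms(3) B by (intro mult_left_mono abs_exp_difference_quotient_le) (auto simp: w_def)
    also have "\<dots> = t powr (p + real n + 1) * exp (- t\<^sup>2 / 2 + (v + B) * t)"
      using t by (simp add: w_def powr_add algebra_simps flip: exp_add)
    finally show "norm (q i t) \<le> t powr (p + real n + 1) * exp (- t\<^sup>2 / 2 + (v + B) * t)" .
    show "(\<lambda>i. q i t) \<longlonglongrightarrow> w t * t"
      unfolding q_def using assms by (intro tendsto_mult tendsto_const tendsto_exp_difference_quotient)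
  qed
  moreover have "integral {0<..} (\<lambda>t. w t * t) = gauss_moment p (Suc n) v"
    unfolding gauss_moment_def w_def by (intro integral_cong) (auto simp: powr_add algebra_simps)
  moreover have "integral {0<..} (q i) = (gauss_moment p n (v + h i) - gauss_moment p n v) / h i" for i
    using q_integral by (rule integral_unique)
  ultimately show ?thesis
    by simp
qed

lemma has_real_derivative_gauss_moment:
  assumes "-1 < p"
  shows "(gauss_moment p n has_real_derivative gauss_moment p (Suc n) v) (at v)"
proof -
  have "((\<lambda>y. (gauss_moment p n y - gauss_moment p n v) / (y - v)) \<longlongrightarrow> gauss_moment p (Suc n) v) (at v)"
    unfolding tendsto_at_iff_sequentially[where s=UNIV] comp_def
  proof (intro allI impI)
    fix X :: "nat \<Rightarrow> real" assume X: "\<forall>i. X i \<in> UNIV - {v}" "X \<longlonglongrightarrow> v"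
    have "(\<lambda>i. (gauss_moment p n (v + (X i - v)) - gauss_moment p n v) / (X i - v))
        \<longlonglongrightarrow> gauss_moment p (Suc n) v"
      using X tendsto_diff[OF X(2) tendsto_const[of v]] assms
      by (intro tendsto_gauss_moment_difference_quotient) auto
    then show "(\<lambda>i. (gauss_moment p n (X i) - gauss_moment p n v) / (X i - v))
        \<longlonglongrightarrow> gauss_moment p (Suc n) v"
      by simp
  qed
  then show ?thesis
    by (simp add: has_field_derivative_iff)
qed

lemma integral_pos_if_pos_on_interval:
  fixes f :: "real \<Rightarrow> real"
  assumes "f integrable_on S" "\<And>t. t \<in> S \<Longrightarrow> 0 \<le> f t" "{a..b} \<subseteq> S" "a < b"
    and "continuous_on {a..b} f" "\<And>t. t \<in> {a..b} \<Longrightarrow> 0 < f t"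
  shows "0 < integral S f"
proof -
  obtain m where m: "m \<in> {a..b}" "\<And>t. t \<in> {a..b} \<Longrightarrow> f m \<le> f t"
    using continuous_attains_inf[OF compact_Icc _ assms(5)] assms(4) by auto
  have "0 < (b - a) * f m"
    using assms(4,6) m(1) by simp
  also have "\<dots> = integral {a..b} (\<lambda>t. f m)"
    using assms(4) by simp
  also have "\<dots> \<le> integral {a..b} f"
    by (rule integral_le) (use integrable_continuous_interval[OF assms(5)] m in auto)
  also have "\<dots> \<le> integral S f"
    by (rule integral_subset_le) (use assms integrable_continuous_interval[OF assms(5)] in auto)
  finally show ?thesis .
qed

lemma gauss_moment_pos:
  assumes "-1 < p"
  shows "0 < gauss_moment p n v"
  unfolding gauss_moment_def
proof (rule integral_pos_if_pos_on_interval[of _ _ 1 2])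
  show "(\<lambda>t. t powr (p + real n) * exp (- t\<^sup>2 / 2 + v * t)) integrable_on {0<..}"
    using assms by (intro gauss_weight_integrable) simp
  show "continuous_on {1..2} (\<lambda>t. t powr (p + real n) * exp (- t\<^sup>2 / 2 + v * t))"
    by (intro continuous_intros) auto
qed auto

lemma gauss_moment_turan:
  assumes "-1 < p"
  shows "(gauss_moment p 1 v)\<^sup>2 < gauss_moment p 2 v * gauss_moment p 0 v"
proof -
  define w where "w k t = t powr (p + real k) * exp (- t\<^sup>2 / 2 + v * t)" for k :: nat and t :: real
  define J where "J k = gauss_moment p k v" for k
  define l where "l = J 1 / J 0"
  define u where "u t = w 0 t * (t - l)\<^sup>2" for t
  have J0: "0 < J 0"
    using gauss_moment_pos[OF assms] by (simp add: J_def)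
  have "(w k has_integral J k) {0<..}" for k
    unfolding w_def[abs_def] J_def gauss_moment_def
    using assms by (intro integrable_integral gauss_weight_integrable) simp
  then have "((\<lambda>t. w 2 t - 2 * l * w 1 t + l\<^sup>2 * w 0 t) has_integral J 2 - 2 * l * J 1 + l\<^sup>2 * J 0) {0<..}"
    by (intro has_integral_add has_integral_diff has_integral_mult_right)
  moreover have "w 2 t - 2 * l * w 1 t + l\<^sup>2 * w 0 t = u t" if "t \<in> {0<..}" for t
  proof -
    have "w k t = w 0 t * t ^ k" for k
      using that by (simp add: w_def powr_add powr_realpow)
    from this[of 1] this[of 2] show ?thesis
      by (simp add: u_def power2_eq_square algebra_simps)
  qed
  ultimately have u_integral: "(u has_integral J 2 - 2 * l * J 1 + l\<^sup>2 * J 0) {0<..}"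
    by (rule has_integral_eq[rotated])
  have "0 < integral {0<..} u"
  proof (rule integral_pos_if_pos_on_interval[of _ _ "\<bar>l\<bar> + 1" "\<bar>l\<bar> + 2"])
    show "u integrable_on {0<..}"
      using u_integral by blast
    show "continuous_on {\<bar>l\<bar> + 1..\<bar>l\<bar> + 2} u"
      unfolding u_def w_def by (intro continuous_intros) auto
    fix t assume "t \<in> {\<bar>l\<bar> + 1..\<bar>l\<bar> + 2}"
    then have "0 < t" "t \<noteq> l"
      by auto
    then show "0 < u t"
      by (simp add: u_def w_def)
  qed (auto simp: u_def w_def)
  then have "0 < J 2 - 2 * l * J 1 + l\<^sup>2 * J 0"
    using integral_unique[OF u_integral] by simp
  then have "0 < J 0 * J 2 - (J 1)\<^sup>2"
    using J0 by (simp add: l_def power2_eq_square field_simps)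
  then show ?thesis
    by (simp add: J_def algebra_simps)
qed

lemma log_convex_derivatives_gauss_moment:
  assumes "-1 < p"
  shows "log_convex_derivatives (gauss_moment p)"
proof
qed (rule has_real_derivative_gauss_moment[OF assms] gauss_moment_pos[OF assms]
    gauss_moment_turan[OF assms])+

section \<open>The integral representation of \<open>\<psi>\<close>\<close>

lemma psi_eq_gauss_moment:
  fixes a b \<sigma> \<rho> x :: real
  assumes "0 < b" "0 < \<sigma>"
  defines "L \<equiv> (b * x - a) / (\<sigma> * b) * sqrt (2 * b)"
  shows "psi a b \<sigma> \<rho> x = gauss_moment (\<rho> / b - 1) 0 L / Gamma (\<rho> / b)"
proof -
  define A where "A = (b * x - a)\<^sup>2 / (2 * \<sigma>\<^sup>2 * b)"
  have arg: "- (b * x - a) / (\<sigma> * b) * sqrt (2 * b) = - L"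
    by (simp add: L_def divide_inverse algebra_simps)
  have "L\<^sup>2 = ((b * x - a) / (\<sigma> * b))\<^sup>2 * (2 * b)"
    unfolding L_def power_mult_distrib using assms(1) by simp
  moreover have "((b * x - a) / (\<sigma> * b))\<^sup>2 * (2 * b) / 4 = A"
    using assms by (simp add: A_def power2_eq_square field_simps)
  ultimately have "(- L)\<^sup>2 / 4 = A"
    by simp
  moreover have "integral {0<..} (\<lambda>t. t powr (- (- \<rho> / b) - 1) * exp (- t\<^sup>2 / 2 - - L * t))
      = gauss_moment (\<rho> / b - 1) 0 L"
    by (simp add: gauss_moment_def)
  ultimately have "psi a b \<sigma> \<rho> x = exp A * (exp (- A) / Gamma (\<rho> / b) * gauss_moment (\<rho> / b - 1) 0 L)"
    unfolding psi_def parab_D_def arg by (simp add: A_def)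
  then show ?thesis
    by (simp add: exp_minus field_simps)
qed

definition psi_deriv :: "real \<Rightarrow> real \<Rightarrow> real \<Rightarrow> real \<Rightarrow> nat \<Rightarrow> real \<Rightarrow> real" where
  "psi_deriv a b \<sigma> \<rho> n x = (sqrt (2 * b) / \<sigma>) ^ n *
     gauss_moment (\<rho> / b - 1) n ((b * x - a) / (\<sigma> * b) * sqrt (2 * b)) / Gamma (\<rho> / b)"

lemma log_convex_derivatives_psi_deriv:
  assumes "0 < b" "0 < \<sigma>" "0 < \<rho>"
  shows "log_convex_derivatives (psi_deriv a b \<sigma> \<rho>)"
proof -
  define k where "k = sqrt (2 * b) / \<sigma>"
  define d where "d = - a / (\<sigma> * b) * sqrt (2 * b)"
  have arg: "(b * x - a) / (\<sigma> * b) * sqrt (2 * b) = k * x + d" for x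
    using assms by (simp add: k_def d_def field_simps)
  have "psi_deriv a b \<sigma> \<rho> = (\<lambda>n x. 1 / Gamma (\<rho> / b) * k ^ n * gauss_moment (\<rho> / b - 1) n (k * x + d))"
    unfolding psi_deriv_def arg k_def[symmetric] by (simp add: fun_eq_iff)
  moreover have "log_convex_derivatives
      (\<lambda>n x. 1 / Gamma (\<rho> / b) * k ^ n * gauss_moment (\<rho> / b - 1) n (k * x + d))"
    using assms by (intro log_convex_derivatives_affine log_convex_derivatives_gauss_moment)
      (simp_all add: k_def)
  ultimately show ?thesis
    by simp
qed

lemma psid_eq_psi_deriv:
  assumes "0 < b" "0 < \<sigma>" "0 < \<rho>"
  shows "psid n a b \<sigma> \<rho> = psi_deriv a b \<sigma> \<rho> n"
proof -
  interpret log_convex_derivatives "psi_deriv a b \<sigma> \<rho>"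
    using assms by (rule log_convex_derivatives_psi_deriv)
  have "psi a b \<sigma> \<rho> = psi_deriv a b \<sigma> \<rho> 0"
    using assms by (simp add: fun_eq_iff psi_eq_gauss_moment psi_deriv_def)
  then show ?thesis
    by (simp add: psid_def higher_deriv_f)
qed

theorem proposition4p7:
  fixes a b \<sigma> \<rho> c \<alpha> :: real
  assumes "b > 0" and "\<sigma> > 0" and "\<rho> > 0" and "c > 0" and "\<alpha> > 0"
  defines "F \<equiv> Ffun a b \<sigma> \<rho> c \<alpha>"
    and "xi \<equiv> xinf_pt a b \<sigma> \<rho> c"
    and "xo \<equiv> x0_pt a b \<sigma> \<rho> c"
  shows "(\<forall>x y. xi < x \<longrightarrow> x < y \<longrightarrow> y < xo \<longrightarrow> F y < F x) \<and>
         (\<exists>Fd :: nat \<Rightarrow> real \<Rightarrow> real. Fd 0 = F \<and>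
           (\<forall>n. \<forall>x\<in>{xi<..xo}. (Fd n has_real_derivative Fd (Suc n) x) (at x within {xi<..xo}))) \<and>
         filterlim F at_top (at_right xi) \<and>
         filterlim (deriv F) at_bot (at_right xi)"
proof -
  interpret P: psi_setting "psi_deriv a b \<sigma> \<rho>" c \<alpha>
    using log_convex_derivatives_psi_deriv[OF assms(1-3)] assms(5)
    by (simp add: psi_setting_def psi_setting_axioms_def)
  note psid = psid_eq_psi_deriv[OF assms(1-3)]
  have "xo = P.x_0" "xi = P.x_inf"
    unfolding xo_def xi_def x0_pt_def xinf_pt_def P.gap_root_def P.gap_def psid
    by (simp_all add: numeral_2_eq_2)
  moreover have "Theta a b \<sigma> \<rho> c \<alpha> = P.theta"
    by (simp add: fun_eq_iff Theta_def P.theta_def P.gap_def psid Let_def numeral_2_eq_2 numeral_3_eq_3)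
  then have "F = P.F"
    using \<open>xo = P.x_0\<close> unfolding F_def Ffun_def[abs_def] P.F_def[abs_def] xo_def by simp
  ultimately show ?thesis
    using P.F_strict_antimono P.F_derivatives P.F_tendsto_at_top P.deriv_F_tendsto_at_bot by simp
qed

end
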